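(* Let $\Lambda\subseteq\mathbb Z^D$ be a lattice that induces a lattice tiling of each of two shapes $\mathcal S$ and $\mathcal S'$, and let $\delta$ be a nonzero ternary vector. Then $(\Lambda,\mathcal S,\delta)$ defines a folding if and only if $(\Lambda,\mathcal S',\delta)$ defines a folding.
   Context: Let $D\ge 1$. A shape is a finite nonempty set $\mathcal S\subset\mathbb Z^D$ containing the origin; the origin is its distinguished center point. A lattice is a set $\Lambda=\{\sum_{j=1}^D u_jv_j : u_1,\dots,u_D\in\mathbb Z\}$ for linearly independent $v_1,\dots,v_D\in\mathbb Z^D$. $\Lambda$ induces a lattice tiling of $\mathcal S$ if the translates $\mathcal S+\lambda$, $\lambda\in\Lambda$, are pairwise disjoint and cover $\mathbb Z^D$. The translate $\mathcal S+\lambda$ is called the copy of $\mathcal S$ with center $\lambda$. For $x\in\mathbb Z^D$, $c(x)$ denotes the unique $\lambda\in\Lambda$ with $x\in\mathcal S+\lambda$. A ternary vector (direction) is a nonzero $\delta\in\{-1,0,+1\}^D$. The folded-row of $(\Lambda,\mathcal S,\delta)$ is the sequence $p_0,p_1,p_2,\dots$ defined by $p_0=0$ and $p_{k+1}=(p_k+\delta)-c(p_k+\delta)$. Equivalently, $p_{k+1}=p_k+\delta$ if $p_k+\delta\in\mathcal S$; otherwise $p_{k+1}$ is $p_k+\delta$ minus the center of the copy of $\mathcal S$ containing $p_k+\delta$. The triple $(\Lambda,\mathcal S,\delta)$ defines a folding if every element of $\mathcal S$ occurs in its folded-row. *)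

theory Defs
  imports "HOL-Analysis.Analysis"
begin

text \<open>Points of Z^D are vectors int ^ 'n, where the finite type 'n has D = CARD('n) elements.\<close>

definition int_lin_indep :: "('n::finite \<Rightarrow> int ^ 'n) \<Rightarrow> bool" where
  "int_lin_indep v \<longleftrightarrow>
     (\<forall>c :: 'n \<Rightarrow> real.
        (\<Sum>j\<in>UNIV. c j *\<^sub>R (\<chi> i. real_of_int (v j $ i))) = 0 \<longrightarrow> (\<forall>j. c j = 0))"

definition is_lattice :: "(int ^ 'n::finite) set \<Rightarrow> bool" where
  "is_lattice L \<longleftrightarrow>
     (\<exists>v :: 'n \<Rightarrow> int ^ 'n. int_lin_indep v \<and>
        L = {\<Sum>j\<in>UNIV. u j *s v j | u :: 'n \<Rightarrow> int. True})"

definition is_shape :: "(int ^ 'n::finite) set \<Rightarrow> bool" where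
  "is_shape S \<longleftrightarrow> finite S \<and> S \<noteq> {} \<and> 0 \<in> S"

definition lattice_tiling :: "(int ^ 'n::finite) set \<Rightarrow> (int ^ 'n) set \<Rightarrow> bool" where
  "lattice_tiling L S \<longleftrightarrow>
     (\<forall>x. \<exists>l\<in>L. x \<in> (\<lambda>s. s + l) ` S) \<and>
     (\<forall>l\<in>L. \<forall>l'\<in>L. l \<noteq> l' \<longrightarrow> ((\<lambda>s. s + l) ` S) \<inter> ((\<lambda>s. s + l') ` S) = {})"

definition tile_center :: "(int ^ 'n::finite) set \<Rightarrow> (int ^ 'n) set \<Rightarrow> int ^ 'n \<Rightarrow> int ^ 'n" where
  "tile_center L S x = (THE l. l \<in> L \<and> x \<in> (\<lambda>s. s + l) ` S)"

definition ternary :: "int ^ 'n::finite \<Rightarrow> bool" where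
  "ternary d \<longleftrightarrow> d \<noteq> 0 \<and> (\<forall>i. d $ i \<in> {-1, 0, 1})"

primrec folded_row :: "(int ^ 'n::finite) set \<Rightarrow> (int ^ 'n) set \<Rightarrow> int ^ 'n \<Rightarrow> nat \<Rightarrow> int ^ 'n" where
  "folded_row L S d 0 = 0"
| "folded_row L S d (Suc k) =
     (folded_row L S d k + d) - tile_center L S (folded_row L S d k + d)"

definition defines_folding :: "(int ^ 'n::finite) set \<Rightarrow> (int ^ 'n) set \<Rightarrow> int ^ 'n \<Rightarrow> bool" where
  "defines_folding L S d \<longleftrightarrow> (\<forall>s\<in>S. \<exists>k. folded_row L S d k = s)"

end

theory Submission
  imports Defs
begin

(* Only two features of the lattice L matter: it is an additive
   subgroup of Z^D, and every point of Z^D is congruent modulo L to exactly one point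
   of a tiled shape S (so S is a complete set of coset representatives of Z^D / L).
   The folded row p_k stays inside S and satisfies p_k = k*d (mod L); hence p_k is
   THE representative in S of the coset of k*d.  Consequently (L, S, d) defines a
   folding iff every coset of L contains a nonnegative multiple k*d -- a condition
   that does not mention S at all.  Applying this characterization to S and S' gives
   the theorem. *)

definition additive_subgroup :: "'a::ab_group_add set \<Rightarrow> bool" where
  "additive_subgroup L \<longleftrightarrow> 0 \<in> L \<and> (\<forall>a\<in>L. \<forall>b\<in>L. a - b \<in> L)"

lemma lattice_is_additive_subgroup:
  fixes L :: "(int ^ 'n::finite) set"
  assumes "is_lattice L"
  shows "additive_subgroup L"
proof -
  from assms obtain v where L: "L = {\<Sum>j\<in>UNIV. u j *s v j | u :: 'n \<Rightarrow> int. True}"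
    unfolding is_lattice_def by blast
  have "(0 :: int ^ 'n) = (\<Sum>j\<in>UNIV. (\<lambda>_. 0::int) j *s v j)"
    by simp
  then have zero: "0 \<in> L"
    unfolding L by (auto intro!: exI[where x="\<lambda>_. 0::int"])
  have diff: "a - b \<in> L" if "a \<in> L" "b \<in> L" for a b
  proof -
    from that obtain u u' where a: "a = (\<Sum>j\<in>UNIV. u j *s v j)"
      and b: "b = (\<Sum>j\<in>UNIV. u' j *s v j)"
      unfolding L by blast
    have "a - b = (\<Sum>j\<in>UNIV. (u j - u' j) *s v j)"
      unfolding a b sum_subtractf[symmetric]
      by (simp add: vector_ssub_ldistrib vec_eq_iff algebra_simps)
    then show ?thesis
      unfolding L by (auto intro!: exI[where x="\<lambda>j. u j - u' j"])
  qed
  show ?thesis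
    unfolding additive_subgroup_def using zero diff by blast
qed

lemma additive_subgroup_add:
  assumes "additive_subgroup L" "a \<in> L" "b \<in> L"
  shows "a + b \<in> L"
proof -
  have "0 - b \<in> L"
    using assms unfolding additive_subgroup_def by blast
  then have "a - (0 - b) \<in> L"
    using assms unfolding additive_subgroup_def by blast
  then show ?thesis
    by simp
qed

lemma tile_center_props:
  assumes "lattice_tiling L S"
  shows "tile_center L S x \<in> L" and "x - tile_center L S x \<in> S"
proof -
  have "\<exists>!l. l \<in> L \<and> x \<in> (\<lambda>s. s + l) ` S"
    using assms unfolding lattice_tiling_def by blast
  then have center: "tile_center L S x \<in> L \<and> x \<in> (\<lambda>s. s + tile_center L S x) ` S"
    unfolding tile_center_def by (rule theI')
  then show "tile_center L S x \<in> L"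
    by blast
  from center obtain s where "s \<in> S" "x = s + tile_center L S x"
    by blast
  then show "x - tile_center L S x \<in> S"
    by (metis add_diff_cancel_right')
qed

(* Two points of a tiled shape that are congruent modulo L coincide:
   otherwise p would lie both in S + 0 and in S + (p - s). *)
lemma tiling_representative_unique:
  assumes "additive_subgroup L" "lattice_tiling L S"
    and "p \<in> S" "s \<in> S" "p - s \<in> L"
  shows "p = s"
proof (rule ccontr)
  assume "p \<noteq> s"
  then have "p - s \<noteq> 0"
    by simp
  moreover have "p \<in> (\<lambda>t. t + (p - s)) ` S" and "p \<in> (\<lambda>t. t + 0) ` S"
    using assms(3,4) by force+
  moreover have "0 \<in> L"
    using assms(1) unfolding additive_subgroup_def by blast
  ultimately show False
    using assms(2,5) unfolding lattice_tiling_def by blast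
qed

lemma folded_row_invariant:
  assumes L: "additive_subgroup L" and tiling: "lattice_tiling L S" and "0 \<in> S"
  shows "folded_row L S d k \<in> S \<and> of_nat k *s d - folded_row L S d k \<in> L"
proof (induction k)
  case 0
  then show ?case
    using assms unfolding additive_subgroup_def by simp
next
  case (Suc k)
  let ?p = "folded_row L S d k"
  let ?c = "tile_center L S (?p + d)"
  have next_row: "folded_row L S d (Suc k) = ?p + d - ?c"
    by simp
  have "of_nat (Suc k) *s d - (?p + d - ?c) = (of_nat k *s d - ?p) + ?c"
    by (simp add: vec_eq_iff algebra_simps)
  moreover have "(of_nat k *s d - ?p) + ?c \<in> L"
    using additive_subgroup_add[OF L] Suc.IH tile_center_props(1)[OF tiling] by blast
  ultimately show ?case
    unfolding next_row using tile_center_props(2)[OF tiling] by metis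
qed

definition multiples_meet_all_cosets :: "(int ^ 'n::finite) set \<Rightarrow> int ^ 'n \<Rightarrow> bool" where
  "multiples_meet_all_cosets L d \<longleftrightarrow> (\<forall>x. \<exists>k::nat. of_nat k *s d - x \<in> L)"

lemma defines_folding_iff_multiples_meet_all_cosets:
  assumes L: "additive_subgroup L" and tiling: "lattice_tiling L S" and "0 \<in> S"
  shows "defines_folding L S d \<longleftrightarrow> multiples_meet_all_cosets L d"
proof
  assume folding: "defines_folding L S d"
  show "multiples_meet_all_cosets L d"
    unfolding multiples_meet_all_cosets_def
  proof
    fix x
    obtain l s where "l \<in> L" "s \<in> S" and x: "x = s + l"
      using tiling unfolding lattice_tiling_def by blast
    obtain k where "folded_row L S d k = s"
      using folding \<open>s \<in> S\<close> unfolding defines_folding_def by blast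
    then have "of_nat k *s d - s \<in> L"
      using folded_row_invariant[OF assms] by blast
    then have "(of_nat k *s d - s) - l \<in> L"
      using L \<open>l \<in> L\<close> unfolding additive_subgroup_def by blast
    then show "\<exists>k::nat. of_nat k *s d - x \<in> L"
      unfolding x by (auto simp: algebra_simps)
  qed
next
  assume cosets: "multiples_meet_all_cosets L d"
  show "defines_folding L S d"
    unfolding defines_folding_def
  proof
    fix s assume "s \<in> S"
    obtain k where k: "of_nat k *s d - s \<in> L"
      using cosets unfolding multiples_meet_all_cosets_def by blast
    have p: "folded_row L S d k \<in> S" "of_nat k *s d - folded_row L S d k \<in> L"
      using folded_row_invariant[OF assms] by auto
    have "(of_nat k *s d - s) - (of_nat k *s d - folded_row L S d k) \<in> L"
      using L k p(2) unfolding additive_subgroup_def by blast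
    then have "folded_row L S d k - s \<in> L"
      by simp
    then show "\<exists>k. folded_row L S d k = s"
      using tiling_representative_unique[OF L tiling p(1) \<open>s \<in> S\<close>] by blast
  qed
qed

theorem mainTheorem3:
  fixes L :: "(int ^ 'n::finite) set" and S S' :: "(int ^ 'n) set" and d :: "int ^ 'n"
  assumes "is_lattice L"
    and "is_shape S" and "is_shape S'"
    and "lattice_tiling L S" and "lattice_tiling L S'"
    and "ternary d"
  shows "defines_folding L S d \<longleftrightarrow> defines_folding L S' d"
proof -
  have L: "additive_subgroup L"
    using assms(1) by (rule lattice_is_additive_subgroup)
  have "0 \<in> S" and "0 \<in> S'"
    using assms(2,3) unfolding is_shape_def by blast+
  then show ?thesis
    using defines_folding_iff_multiples_meet_all_cosets[OF L assms(4)]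
      defines_folding_iff_multiples_meet_all_cosets[OF L assms(5)] by simp
qed

end
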